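(* Let $R$, $G$, $*$, $\sigma$ and $\mathcal{S}$ be as in the context, and suppose $\mathcal{S}$ is anticommutative. If $*$ is not the identity map on $G$, then: - $\operatorname{char}(R)=4$; - for every $x\in G\setminus G_*$ we have $xx^*=x^*x$ and $x^2\in G_*$.
   Context: Throughout, $R$ is a commutative ring with unity with $\operatorname{char}(R)\neq 2$, and $\mathcal{U}(R)$ is its unit group. $G$ is a group with an involution $*$, i.e. a map $x\mapsto x^*$ with $(xy)^*=y^*x^*$ and $(x^* )^*=x$. The map $\sigma:G\to\mathcal{U}(R)$ is a nontrivial group homomorphism with kernel $N=\ker\sigma$, and it is compatible with $*$: $xx^*\in N$ for all $x\in G$. The group ring $RG$ carries the involution $\left(\sum_{x\in G}\alpha_x x\right)^{\sigma*}=\sum_{x\in G}\sigma(x)\alpha_x x^*$. Write $G_*=\{x\in G: x^*=x\}$ and $N_*=G_*\cap N$. Let $\mathcal{S}$ be the $R$-submodule of $RG$ spanned by the union of the following three sets: - $2\mathcal{S}_1=\{2x: x\in N_*\}$; - $\mathcal{S}_2=\{\alpha x: x\in G_*\setminus N,\ \alpha\in R,\ \alpha(1-\sigma(x))=0\}$; - $\mathcal{S}_3=\{x+\sigma(x)x^*: x\in G\setminus G_*\}$. $\mathcal{S}$ is called anticommutative if $ab+ba=0$ for all $a,b\in\mathcal{S}$. *)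

theory Defs
  imports "HOL-Algebra.Group"
begin

text \<open>Group ring RG over a commutative ring 'r (type class) and a group G (HOL-Algebra).
Elements of RG are finitely supported functions from the carrier of G to 'r,
vanishing outside the carrier.\<close>

definition grelem :: "('g, 'b) monoid_scheme \<Rightarrow> ('g \<Rightarrow> 'r::comm_ring_1) \<Rightarrow> bool" where
  "grelem G a \<longleftrightarrow> finite {z. a z \<noteq> 0} \<and> (\<forall>z. z \<notin> carrier G \<longrightarrow> a z = 0)"

definition grbasis :: "('g, 'b) monoid_scheme \<Rightarrow> 'g \<Rightarrow> ('g \<Rightarrow> 'r::comm_ring_1)" where
  "grbasis G x = (\<lambda>z. if z = x then 1 else 0)"

definition grmult :: "('g, 'b) monoid_scheme \<Rightarrow> ('g \<Rightarrow> 'r::comm_ring_1) \<Rightarrow> ('g \<Rightarrow> 'r) \<Rightarrow> ('g \<Rightarrow> 'r)" where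
  "grmult G a b = (\<lambda>z. if z \<in> carrier G
      then (\<Sum>x\<in>{x \<in> carrier G. a x \<noteq> 0}. a x * b (inv\<^bsub>G\<^esub> x \<otimes>\<^bsub>G\<^esub> z)) else 0)"

definition group_involution :: "('g, 'b) monoid_scheme \<Rightarrow> ('g \<Rightarrow> 'g) \<Rightarrow> bool" where
  "group_involution G s \<longleftrightarrow> (\<forall>x\<in>carrier G. s x \<in> carrier G \<and> s (s x) = x) \<and>
     (\<forall>x\<in>carrier G. \<forall>y\<in>carrier G. s (x \<otimes>\<^bsub>G\<^esub> y) = s y \<otimes>\<^bsub>G\<^esub> s x)"

definition Gstar :: "('g, 'b) monoid_scheme \<Rightarrow> ('g \<Rightarrow> 'g) \<Rightarrow> 'g set" where
  "Gstar G s = {x \<in> carrier G. s x = x}"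

definition kerN :: "('g, 'b) monoid_scheme \<Rightarrow> ('g \<Rightarrow> 'r::comm_ring_1) \<Rightarrow> 'g set" where
  "kerN G \<sigma> = {x \<in> carrier G. \<sigma> x = 1}"

definition Sgens :: "('g, 'b) monoid_scheme \<Rightarrow> ('g \<Rightarrow> 'g) \<Rightarrow> ('g \<Rightarrow> 'r::comm_ring_1) \<Rightarrow> ('g \<Rightarrow> 'r) set" where
  "Sgens G s \<sigma> =
     {(\<lambda>z. 2 * grbasis G x z) | x. x \<in> Gstar G s \<inter> kerN G \<sigma>}
   \<union> {(\<lambda>z. \<alpha> * grbasis G x z) | x \<alpha>. x \<in> Gstar G s - kerN G \<sigma> \<and> \<alpha> * (1 - \<sigma> x) = 0}
   \<union> {(\<lambda>z. grbasis G x z + \<sigma> x * grbasis G (s x) z) | x. x \<in> carrier G - Gstar G s}"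

inductive_set Sspan :: "('g, 'b) monoid_scheme \<Rightarrow> ('g \<Rightarrow> 'g) \<Rightarrow> ('g \<Rightarrow> 'r::comm_ring_1) \<Rightarrow> ('g \<Rightarrow> 'r) set"
  for G s \<sigma> where
  zero: "(\<lambda>z. 0) \<in> Sspan G s \<sigma>"
| gen: "a \<in> Sgens G s \<sigma> \<Longrightarrow> a \<in> Sspan G s \<sigma>"
| add: "a \<in> Sspan G s \<sigma> \<Longrightarrow> b \<in> Sspan G s \<sigma> \<Longrightarrow> (\<lambda>z. a z + b z) \<in> Sspan G s \<sigma>"
| smult: "a \<in> Sspan G s \<sigma> \<Longrightarrow> (\<lambda>z. r * a z) \<in> Sspan G s \<sigma>"

definition anticommutative :: "('g, 'b) monoid_scheme \<Rightarrow> ('g \<Rightarrow> 'r::comm_ring_1) set \<Rightarrow> bool" where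
  "anticommutative G S \<longleftrightarrow> (\<forall>a\<in>S. \<forall>b\<in>S. (\<lambda>z. grmult G a b z + grmult G b a z) = (\<lambda>z. 0))"

end

theory Submission
  imports Defs
begin

text \<open>Write \<open>a\<^sub>x = x + \<sigma>(x) x\<^sup>*\<close> for \<open>x \<notin> G\<^sub>*\<close>. Since \<open>2\<close> is central in \<open>RG\<close>, anticommuting \<open>2 = 2\<cdot>1 \<in> \<S>\<close>
  with \<open>a\<^sub>x\<close> gives \<open>4 a\<^sub>x = 0\<close>, hence \<open>4 = 0\<close> in \<open>R\<close>; together with \<open>char R \<noteq> 2\<close> this forces
  \<open>char R = 4\<close>, so \<open>2 \<noteq> 0\<close> and \<open>2\<sigma>(x) \<noteq> 0\<close>. Anticommuting \<open>a\<^sub>x\<close> with itself gives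
  \<open>2 a\<^sub>x\<^sup>2 = 0\<close>, where \<open>a\<^sub>x\<^sup>2 = x\<^sup>2 + \<sigma>(x)(x x\<^sup>* + x\<^sup>* x) + \<sigma>(x)\<^sup>2 (x\<^sup>*)\<^sup>2\<close>. If \<open>x\<^sup>2 \<noteq> (x\<^sup>*)\<^sup>2\<close> the
  coefficient of \<open>x\<^sup>2\<close> would be \<open>1\<close>, and if \<open>x x\<^sup>* \<noteq> x\<^sup>* x\<close> the coefficient of \<open>x x\<^sup>*\<close> would be
  \<open>\<sigma>(x)\<close>; both contradict \<open>2 a\<^sub>x\<^sup>2 = 0\<close>. Finally \<open>(x\<^sup>2)\<^sup>* = (x\<^sup>*)\<^sup>2 = x\<^sup>2\<close>.\<close>

lemma unit_idempotent_eq_one: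
  fixes a :: "'a::comm_monoid_mult"
  assumes "a dvd 1" "a * a = a"
  shows "a = 1"
proof -
  obtain k where k: "1 = a * k" using assms(1) by (elim dvdE)
  have "a = a * (a * k)" using k by simp
  also have "\<dots> = a * k" using assms(2) by (simp add: mult.assoc[symmetric])
  finally show ?thesis using k by simp
qed

lemma mult_unit_eq_0_iff:
  fixes a c :: "'a::comm_semiring_1"
  assumes "c dvd 1"
  shows "a * c = 0 \<longleftrightarrow> a = 0"
proof
  assume "a * c = 0"
  obtain k where "1 = c * k" using assms by (elim dvdE)
  then have "a = a * c * k" by (simp add: mult.assoc)
  then show "a = 0" using \<open>a * c = 0\<close> by simp
qed simp

lemma CHAR_eq_4I:
  assumes "(4::'a::semiring_1) = 0" "(1::'a) \<noteq> 0" "CHAR('a) \<noteq> 2"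
  shows "CHAR('a) = 4"
proof -
  have "CHAR('a) dvd 4"
    using assms(1) of_nat_eq_0_iff_char_dvd[of 4, where 'a='a] by simp
  moreover have "CHAR('a) \<noteq> 1"
    using assms(2) of_nat_CHAR[where 'a='a] by auto
  moreover have "CHAR('a) \<noteq> 0" "CHAR('a) \<noteq> 3"
    using \<open>CHAR('a) dvd 4\<close> by (metis dvd_0_left_iff zero_neq_numeral, auto)
  moreover have "CHAR('a) \<le> 4"
    using \<open>CHAR('a) dvd 4\<close> by (rule dvd_imp_le) simp
  ultimately show ?thesis using assms(3) by linarith
qed

lemma group_involution_one:
  fixes G (structure)
  assumes "group G" "group_involution G s"
  shows "s \<one>\<^bsub>G\<^esub> = \<one>\<^bsub>G\<^esub>"
proof -
  interpret group G by fact
  have s1: "s \<one> \<in> carrier G" and "s (\<one> \<otimes> \<one>) = s \<one> \<otimes> s \<one>"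
    using assms(2) unfolding group_involution_def by blast+
  then have "s \<one> = s \<one> \<otimes> s \<one>" by simp
  then have "\<one> \<otimes> s \<one> = s \<one> \<otimes> s \<one>" using s1 by simp
  then show ?thesis using s1 by (metis one_closed right_cancel)
qed

lemma grmult_eq_sum:
  assumes "finite F" "F \<subseteq> carrier G" "\<And>y. a y \<noteq> 0 \<Longrightarrow> y \<in> F" "z \<in> carrier G"
  shows "grmult G a b z = (\<Sum>y\<in>F. a y * b (inv\<^bsub>G\<^esub> y \<otimes>\<^bsub>G\<^esub> z))"
proof -
  have "(\<Sum>y\<in>{y \<in> carrier G. a y \<noteq> 0}. a y * b (inv\<^bsub>G\<^esub> y \<otimes>\<^bsub>G\<^esub> z))
      = (\<Sum>y\<in>F. a y * b (inv\<^bsub>G\<^esub> y \<otimes>\<^bsub>G\<^esub> z))"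
    by (rule sum.mono_neutral_left) (use assms in auto)
  then show ?thesis using assms(4) by (simp add: grmult_def)
qed

definition grbinom :: "('g, 'b) monoid_scheme \<Rightarrow> 'g \<Rightarrow> 'r::comm_ring_1 \<Rightarrow> 'g \<Rightarrow> ('g \<Rightarrow> 'r)" where
  "grbinom G x c y = (\<lambda>w. grbasis G x w + c * grbasis G y w)"

lemma grbinom_apply: "grbinom G x c y w = of_bool (w = x) + c * of_bool (w = y)"
  by (simp add: grbinom_def grbasis_def)

lemma grmult_grbinom_left:
  assumes "x \<in> carrier G" "y \<in> carrier G" "x \<noteq> y" "z \<in> carrier G"
  shows "grmult G (grbinom G x c y) b z
     = b (inv\<^bsub>G\<^esub> x \<otimes>\<^bsub>G\<^esub> z) + c * b (inv\<^bsub>G\<^esub> y \<otimes>\<^bsub>G\<^esub> z)"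
proof -
  have "grmult G (grbinom G x c y) b z
      = (\<Sum>w\<in>{x, y}. grbinom G x c y w * b (inv\<^bsub>G\<^esub> w \<otimes>\<^bsub>G\<^esub> z))"
    by (rule grmult_eq_sum) (use assms in \<open>auto simp: grbinom_apply\<close>)
  then show ?thesis
    using assms(3) by (simp add: grbinom_apply)
qed

lemma grmult_scaled_one_left:
  fixes G (structure)
  assumes "group G" "z \<in> carrier G"
  shows "grmult G (\<lambda>w. c * grbasis G \<one> w) b z = c * b z"
proof -
  interpret group G by fact
  have "grmult G (\<lambda>w. c * grbasis G \<one> w) b z
      = (\<Sum>w\<in>{\<one>}. c * grbasis G \<one> w * b (inv w \<otimes> z))"
    by (rule grmult_eq_sum) (use assms in \<open>auto simp: grbasis_def split: if_splits\<close>)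
  then show ?thesis using assms by (simp add: grbasis_def)
qed

lemma grmult_grbinom_scaled_one:
  fixes G (structure)
  assumes "group G" "x \<in> carrier G" "y \<in> carrier G" "x \<noteq> y" "z \<in> carrier G"
  shows "grmult G (grbinom G x c y) (\<lambda>w. d * grbasis G \<one> w) z = d * grbinom G x c y z"
proof -
  interpret group G by fact
  have "inv x \<otimes> z = \<one> \<longleftrightarrow> z = x" "inv y \<otimes> z = \<one> \<longleftrightarrow> z = y"
    using assms by (metis inv_solve_left' one_closed r_one)+
  then show ?thesis
    using assms by (simp add: grmult_grbinom_left grbinom_apply grbasis_def algebra_simps)
qed

lemma grbinom_square:
  fixes G (structure)
  assumes "group G" "x \<in> carrier G" "y \<in> carrier G" "x \<noteq> y" "z \<in> carrier G"
  shows "grmult G (grbinom G x c y) (grbinom G x c y) z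
     = of_bool (z = x \<otimes> x) + c * of_bool (z = x \<otimes> y)
       + c * of_bool (z = y \<otimes> x) + c * c * of_bool (z = y \<otimes> y)"
proof -
  interpret group G by fact
  have "inv u \<otimes> z = v \<longleftrightarrow> z = u \<otimes> v" if "u \<in> carrier G" "v \<in> carrier G" for u v
    using that assms(5) by (metis inv_solve_left')
  then show ?thesis
    using assms by (simp add: grmult_grbinom_left grbinom_apply algebra_simps)
qed

lemma four_eq_0_if_grbinom_anticommutes_with_two:
  fixes G (structure) and c :: "'r::comm_ring_1"
  assumes "group G" "x \<in> carrier G" "y \<in> carrier G" "x \<noteq> y"
    and "grmult G (grbinom G x c y) (\<lambda>w. 2 * grbasis G \<one> w) x
       + grmult G (\<lambda>w. 2 * grbasis G \<one> w) (grbinom G x c y) x = 0"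
  shows "(4::'r) = 0"
  using assms by (simp add: grmult_grbinom_scaled_one grmult_scaled_one_left grbinom_apply)

lemma commute_and_square_eq_if_two_grbinom_square_eq_0:
  fixes G (structure) and c :: "'r::comm_ring_1"
  assumes "group G" "x \<in> carrier G" "y \<in> carrier G" "x \<noteq> y"
    and "c dvd 1" "(2::'r) \<noteq> 0"
    and two_sq: "\<And>z. z \<in> carrier G \<Longrightarrow> 2 * grmult G (grbinom G x c y) (grbinom G x c y) z = 0"
  shows "x \<otimes> y = y \<otimes> x \<and> x \<otimes> x = y \<otimes> y"
proof -
  interpret group G by fact
  have square: "x \<otimes> x = y \<otimes> y"
  proof (rule ccontr)
    assume "x \<otimes> x \<noteq> y \<otimes> y"
    moreover have "x \<otimes> x \<noteq> x \<otimes> y" "x \<otimes> x \<noteq> y \<otimes> x"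
      using assms(2-4) by simp_all
    ultimately have "grmult G (grbinom G x c y) (grbinom G x c y) (x \<otimes> x) = 1"
      using assms(1-4) by (simp add: grbinom_square)
    then show False using two_sq[of "x \<otimes> x"] assms(2,6) by simp
  qed
  have commute: "x \<otimes> y = y \<otimes> x"
  proof (rule ccontr)
    assume "x \<otimes> y \<noteq> y \<otimes> x"
    moreover have "x \<otimes> y \<noteq> x \<otimes> x" "x \<otimes> y \<noteq> y \<otimes> y"
      using assms(2-4) by simp_all
    ultimately have "grmult G (grbinom G x c y) (grbinom G x c y) (x \<otimes> y) = c"
      using assms(1-4) by (simp add: grbinom_square)
    then show False
      using two_sq[of "x \<otimes> y"] assms(2,3,5,6) mult_unit_eq_0_iff[of c 2] by simp
  qed
  from commute square show ?thesis ..
qed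

lemma anticommutativeD:
  assumes "anticommutative G S" "a \<in> S" "b \<in> S"
  shows "grmult G a b z + grmult G b a z = 0"
  using assms unfolding anticommutative_def by metis

lemma grbinom_in_Sspan:
  assumes "x \<in> carrier G - Gstar G s"
  shows "grbinom G x (\<sigma> x) (s x) \<in> Sspan G s \<sigma>"
  using assms by (intro Sspan.gen) (auto simp: Sgens_def grbinom_def)

lemma two_one_in_Sspan:
  fixes G (structure)
  assumes "group G" "group_involution G s" "\<sigma> \<one> = 1"
  shows "(\<lambda>w. 2 * grbasis G \<one> w) \<in> Sspan G s \<sigma>"
  using assms group.is_monoid[OF assms(1)]
  by (intro Sspan.gen) (auto simp: Sgens_def Gstar_def kerN_def group_involution_one)

lemma group_involution_moved:
  assumes "group_involution G s" "x \<in> carrier G - Gstar G s"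
  shows "s x \<in> carrier G" "x \<noteq> s x"
  using assms by (auto simp: Gstar_def group_involution_def)

lemma four_eq_0_if_Sspan_anticommutative:
  fixes G (structure) and \<sigma> :: "'g \<Rightarrow> 'r::comm_ring_1"
  assumes "group G" "group_involution G s" "\<sigma> \<one> = 1"
    and "anticommutative G (Sspan G s \<sigma>)" "x \<in> carrier G - Gstar G s"
  shows "(4::'r) = 0"
proof (rule four_eq_0_if_grbinom_anticommutes_with_two)
  show "x \<in> carrier G" using assms(5) by blast
  show "s x \<in> carrier G" "x \<noteq> s x" using assms(2,5) by (rule group_involution_moved)+
  have two: "(\<lambda>w. 2 * grbasis G \<one> w) \<in> Sspan G s \<sigma>"
    using assms(1-3) by (rule two_one_in_Sspan)
  show "grmult G (grbinom G x (\<sigma> x) (s x)) (\<lambda>w. 2 * grbasis G \<one> w) x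
      + grmult G (\<lambda>w. 2 * grbasis G \<one> w) (grbinom G x (\<sigma> x) (s x)) x = 0"
    by (rule anticommutativeD[OF assms(4) grbinom_in_Sspan[OF assms(5)] two])
qed fact

lemma commute_and_square_fixed_if_Sspan_anticommutative:
  fixes G (structure) and \<sigma> :: "'g \<Rightarrow> 'r::comm_ring_1"
  assumes "group G" "group_involution G s" "\<forall>x\<in>carrier G. \<sigma> x dvd 1"
    and "anticommutative G (Sspan G s \<sigma>)" "(2::'r) \<noteq> 0" "x \<in> carrier G - Gstar G s"
  shows "x \<otimes> s x = s x \<otimes> x \<and> x \<otimes> x \<in> Gstar G s"
proof -
  interpret group G by fact
  have x: "x \<in> carrier G" using assms(6) by blast
  have sx: "s x \<in> carrier G" "x \<noteq> s x"
    using assms(2,6) by (rule group_involution_moved)+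
  have "x \<otimes> s x = s x \<otimes> x \<and> x \<otimes> x = s x \<otimes> s x"
    using assms(1) x sx _ assms(5)
  proof (rule commute_and_square_eq_if_two_grbinom_square_eq_0)
    show "\<sigma> x dvd 1" using x assms(3) by blast
    show "2 * grmult G (grbinom G x (\<sigma> x) (s x)) (grbinom G x (\<sigma> x) (s x)) z = 0" for z
      using anticommutativeD[OF assms(4) grbinom_in_Sspan[OF assms(6)] grbinom_in_Sspan[OF assms(6)], of z]
      by simp
  qed
  moreover have "s (x \<otimes> x) = s x \<otimes> s x"
    using x assms(2) by (simp add: group_involution_def)
  ultimately show ?thesis
    using x sx by (simp add: Gstar_def)
qed

theorem lemma3p3:
  fixes G :: "('g, 'b) monoid_scheme" and s :: "'g \<Rightarrow> 'g" and \<sigma> :: "'g \<Rightarrow> 'r::comm_ring_1"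
  assumes "group G"
    and "CHAR('r) \<noteq> 2"
    and "group_involution G s"
    and "\<forall>x\<in>carrier G. \<sigma> x dvd 1"
    and "\<forall>x\<in>carrier G. \<forall>y\<in>carrier G. \<sigma> (x \<otimes>\<^bsub>G\<^esub> y) = \<sigma> x * \<sigma> y"
    and "\<exists>x\<in>carrier G. \<sigma> x \<noteq> 1"
    and "\<forall>x\<in>carrier G. x \<otimes>\<^bsub>G\<^esub> s x \<in> kerN G \<sigma>"
    and "anticommutative G (Sspan G s \<sigma>)"
    and "\<exists>x\<in>carrier G. s x \<noteq> x"
  shows "CHAR('r) = 4 \<and>
    (\<forall>x\<in>carrier G - Gstar G s.
       x \<otimes>\<^bsub>G\<^esub> s x = s x \<otimes>\<^bsub>G\<^esub> x \<and> x \<otimes>\<^bsub>G\<^esub> x \<in> Gstar G s)"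
proof -
  interpret group G by fact
  have "\<sigma> \<one>\<^bsub>G\<^esub> = 1"
    using assms(4,5) by (intro unit_idempotent_eq_one) (simp_all, metis one_closed r_one)
  moreover obtain x where "x \<in> carrier G - Gstar G s"
    using assms(9) by (auto simp: Gstar_def)
  ultimately have "(4::'r) = 0"
    using assms(1,3,8) by (intro four_eq_0_if_Sspan_anticommutative)
  moreover have "(1::'r) \<noteq> 0"
    using assms(6) by (metis mult_1 mult_zero_left)
  ultimately have char4: "CHAR('r) = 4"
    using assms(2) by (rule CHAR_eq_4I)
  then have "(2::'r) \<noteq> 0"
    using of_nat_eq_0_iff_char_dvd[of 2, where 'a='r] by auto
  with char4 show ?thesis
    using commute_and_square_fixed_if_Sspan_anticommutative[OF assms(1,3,4,8)] by blast
qed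

end
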